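(* Let $A=A_s+A_d\epsilon\in\mathbb{DC}^{m\times n}$ and let $A=U\Sigma V^*$ be a singular value decomposition of $A$, where $U\in\mathbb{DC}^{m\times m}$ and $V\in\mathbb{DC}^{n\times n}$ are unitary dual complex matrices and $$\Sigma=\begin{bmatrix}\Sigma_{1s}&O\\O&O\end{bmatrix}+\begin{bmatrix}\Sigma_{1d}&O\\O&\Sigma_{2d}\end{bmatrix}\epsilon\in\mathbb{D}^{m\times n},$$ with $\Sigma_1=\Sigma_{1s}+\Sigma_{1d}\epsilon=\mathrm{diag}(\mu_1,\dots,\mu_r)$, $\mu_1\ge\dots\ge\mu_r$ positive appreciable dual real numbers, and $\Sigma_{2d}\epsilon=\mathrm{diag}(\mu_{r+1},\dots,\mu_t,0,\dots,0)$ with $\mu_{r+1}\ge\dots\ge\mu_t$ positive infinitesimal dual real numbers, $r\le t\le\min\{m,n\}$. Define $$\Sigma^G=\begin{bmatrix}\Sigma_1^{-1}&O\\O&O\end{bmatrix}=\begin{bmatrix}\Sigma_{1s}^{-1}&O\\O&O\end{bmatrix}-\begin{bmatrix}\Sigma_{1s}^{-2}\Sigma_{1d}&O\\O&O\end{bmatrix}\epsilon\in\mathbb{D}^{n\times m},\qquad A^G=V\Sigma^G U^*.$$ Then $X=A^G$ satisfies the four conditions (1e) $AXA=A_e$, (2) $XAX=X$, (3) $(AX)^*=AX$, (4) $(XA)^*=XA$, and it is the unique $X\in\mathbb{DC}^{n\times m}$ satisfying these four conditions. Moreover, if $A_d=O$ (i.e. $A$ is a complex matrix), then $A^G=A_s^+$,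 the Moore–Penrose inverse of $A_s$.
   Context: A dual number is $a=a_s+a_d\epsilon$ where $\epsilon\neq0$, $\epsilon^2=0$, and $\epsilon$ commutes with real/complex numbers; it is a dual real (resp. dual complex) number if $a_s,a_d$ are real (resp. complex). It is appreciable if $a_s\neq0$ and infinitesimal otherwise. Dual reals are totally ordered by: $a>b$ iff $a_s>b_s$, or $a_s=b_s$ and $a_d>b_d$. For appreciable $\mu$, $\mu^{-1}=\mu_s^{-1}-\mu_s^{-2}\mu_d\epsilon$. A dual complex matrix is $A=A_s+A_d\epsilon$ with $A_s,A_d$ complex matrices; $A^*=A_s^*+A_d^*\epsilon$; $U$ is unitary if $U^*U=UU^*=I$. Every $A\in\mathbb{DC}^{m\times n}$ has a singular value decomposition $A=U\Sigma V^*$ as in the statement, and the diagonal entries $\mu_1,\dots,\mu_t$ (with multiplicities) are unique. The essential part of $A$ is $A_e=U\begin{bmatrix}\Sigma_1&O\\O&O\end{bmatrix}V^*$ (with $\Sigma_1=\mathrm{diag}(\mu_1,\dots,\mu_r)$ the appreciable singular values); it is well-defined independent of the chosen SVD. A matrix $X$ satisfying (1e),(2),(3),(4) is called the genuine Moore–Penrose inverse (GMPI) of $A$, denoted $A^G$. *)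

theory Defs
  imports Complex_Main "Jordan_Normal_Form.Matrix"
begin

definition ctrans :: "complex mat \<Rightarrow> complex mat" where
  "ctrans A = mat (dim_col A) (dim_row A) (\<lambda>(i,j). cnj (A $$ (j,i)))"

(* A dual complex matrix A_s + A_d \<epsilon> is represented by the pair (A_s, A_d) *)
type_synonym dcmat = "complex mat \<times> complex mat"

definition dcarrier :: "nat \<Rightarrow> nat \<Rightarrow> dcmat set" where
  "dcarrier m n = {A. fst A \<in> carrier_mat m n \<and> snd A \<in> carrier_mat m n}"

(* (A_s + A_d e)(B_s + B_d e) = A_s B_s + (A_s B_d + A_d B_s) e, since e^2 = 0 *)
definition dmult :: "dcmat \<Rightarrow> dcmat \<Rightarrow> dcmat" (infixl "**\<^sub>d" 70) where
  "dmult A B = (fst A * fst B, fst A * snd B + snd A * fst B)"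

definition dstar :: "dcmat \<Rightarrow> dcmat" where
  "dstar A = (ctrans (fst A), ctrans (snd A))"

definition dunitary :: "nat \<Rightarrow> dcmat \<Rightarrow> bool" where
  "dunitary k U \<longleftrightarrow> U \<in> dcarrier k k \<and>
     dmult (dstar U) U = (1\<^sub>m k, 0\<^sub>m k k) \<and> dmult U (dstar U) = (1\<^sub>m k, 0\<^sub>m k k)"

(* Dual real numbers a_s + a_d e as pairs (a_s, a_d), with the total (lexicographic) order *)
type_synonym dreal = "real \<times> real"

definition dreal_le :: "dreal \<Rightarrow> dreal \<Rightarrow> bool" where
  "dreal_le a b \<longleftrightarrow> fst a < fst b \<or> (fst a = fst b \<and> snd a \<le> snd b)"

definition dreal_less :: "dreal \<Rightarrow> dreal \<Rightarrow> bool" where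
  "dreal_less a b \<longleftrightarrow> fst a < fst b \<or> (fst a = fst b \<and> snd a < snd b)"

definition dreal_inv :: "dreal \<Rightarrow> dreal" where
  "dreal_inv a = (1 / fst a, - snd a / (fst a)\<^sup>2)"

definition ddiag :: "nat \<Rightarrow> nat \<Rightarrow> (nat \<Rightarrow> dreal) \<Rightarrow> dcmat" where
  "ddiag m n d =
     (mat m n (\<lambda>(i,j). if i = j then complex_of_real (fst (d i)) else 0),
      mat m n (\<lambda>(i,j). if i = j then complex_of_real (snd (d i)) else 0))"

definition mp_inverse :: "complex mat \<Rightarrow> complex mat" where
  "mp_inverse A = (THE X. X \<in> carrier_mat (dim_col A) (dim_row A) \<and>
      A * X * A = A \<and> X * A * X = X \<and> ctrans (A * X) = A * X \<and> ctrans (X * A) = X * A)"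

end

theory Submission
  imports Defs
begin

(*
  Both sides of the four conditions transform covariantly under A |-> U A V*, X |-> V X U* for
  unitary U, V, so it suffices to treat the diagonal dual matrix Sigma.  There, comparing the
  standard and the dual parts of the four equations entry by entry forces X to be diagonal, with
  mu_s^-1 - mu_s^-2 mu_d eps at the appreciable singular values and 0 elsewhere.  If A_d = O,
  the dual part of U* A V = Sigma has the form Sigma_s M + N Sigma_s, whose diagonal vanishes
  wherever that of Sigma_s does; so A has no infinitesimal singular values, A_e = A, and for
  complex X the four conditions are just the Penrose equations.
*)

section \<open>Conjugate transpose and dual complex matrices\<close>

lemma ctrans_dims [simp]:
  "dim_row (ctrans A) = dim_col A" "dim_col (ctrans A) = dim_row A"
  by (simp_all add: ctrans_def)

lemma ctrans_carrier_mat [simp]: "A \<in> carrier_mat m n \<Longrightarrow> ctrans A \<in> carrier_mat n m"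
  by (simp add: ctrans_def)

lemma index_ctrans [simp]:
  "i < dim_col A \<Longrightarrow> j < dim_row A \<Longrightarrow> ctrans A $$ (i, j) = cnj (A $$ (j, i))"
  by (simp add: ctrans_def)

lemma ctrans_ctrans [simp]: "ctrans (ctrans A) = A"
  by (rule eq_matI) auto

lemma ctrans_zero [simp]: "ctrans (0\<^sub>m m n) = 0\<^sub>m n m"
  by (rule eq_matI) auto

lemma ctrans_add:
  "A \<in> carrier_mat m n \<Longrightarrow> B \<in> carrier_mat m n \<Longrightarrow> ctrans (A + B) = ctrans A + ctrans B"
  by (rule eq_matI) auto

lemma ctrans_mult:
  "A \<in> carrier_mat m k \<Longrightarrow> B \<in> carrier_mat k n \<Longrightarrow> ctrans (A * B) = ctrans B * ctrans A"
  by (rule eq_matI) (auto simp: scalar_prod_def cnj_sum intro!: sum.cong)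

lemma dmult_dcarrier: "A \<in> dcarrier m k \<Longrightarrow> B \<in> dcarrier k n \<Longrightarrow> A **\<^sub>d B \<in> dcarrier m n"
  by (auto simp: dcarrier_def dmult_def)

lemma dstar_dcarrier: "A \<in> dcarrier m n \<Longrightarrow> dstar A \<in> dcarrier n m"
  by (auto simp: dcarrier_def dstar_def)

lemma dstar_dstar [simp]: "dstar (dstar A) = A"
  by (simp add: dstar_def)

lemma dmult_assoc:
  assumes "A \<in> dcarrier a b" "B \<in> dcarrier b c" "C \<in> dcarrier c d"
  shows "A **\<^sub>d B **\<^sub>d C = A **\<^sub>d (B **\<^sub>d C)"
proof -
  obtain As Ad Bs Bd Cs Cd where AB: "A = (As, Ad)" "B = (Bs, Bd)" "C = (Cs, Cd)"
    by (cases A, cases B, cases C) auto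
  have c: "As \<in> carrier_mat a b" "Ad \<in> carrier_mat a b" "Bs \<in> carrier_mat b c"
    "Bd \<in> carrier_mat b c" "Cs \<in> carrier_mat c d" "Cd \<in> carrier_mat c d"
    using assms AB by (auto simp: dcarrier_def)
  have "(As * Bd + Ad * Bs) * Cs = As * Bd * Cs + Ad * Bs * Cs"
    using c by (intro add_mult_distrib_mat) auto
  moreover have "As * (Bs * Cd + Bd * Cs) = As * (Bs * Cd) + As * (Bd * Cs)"
    using c by (intro mult_add_distrib_mat) auto
  ultimately have "As * Bs * Cd + (As * Bd + Ad * Bs) * Cs
      = As * (Bs * Cd + Bd * Cs) + Ad * (Bs * Cs)"
    using c by (simp add: assoc_add_mat[of _ a d])
  then show ?thesis
    using c AB by (simp add: dmult_def)
qed

lemma dstar_dmult: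
  assumes "A \<in> dcarrier m k" "B \<in> dcarrier k n"
  shows "dstar (A **\<^sub>d B) = dstar B **\<^sub>d dstar A"
  using assms
  by (auto simp: dcarrier_def dstar_def dmult_def ctrans_add[of _ m n] ctrans_mult[of _ m k]
      intro: comm_add_mat[of _ n m])

lemma fst_dmult: "fst (A **\<^sub>d B) = fst A * fst B"
  by (simp add: dmult_def)

lemma snd_dmult: "snd (A **\<^sub>d B) = fst A * snd B + snd A * fst B"
  by (simp add: dmult_def)

lemma fst_dstar: "fst (dstar A) = ctrans (fst A)"
  by (simp add: dstar_def)

lemma snd_dstar: "snd (dstar A) = ctrans (snd A)"
  by (simp add: dstar_def)

lemma dmult_complex:
  "B \<in> carrier_mat m k \<Longrightarrow> C \<in> carrier_mat k n \<Longrightarrow> (B, 0\<^sub>m m k) **\<^sub>d (C, 0\<^sub>m k n) = (B * C, 0\<^sub>m m n)"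
  by (simp add: dmult_def)

lemma dmult_one_left: "A \<in> dcarrier m n \<Longrightarrow> (1\<^sub>m m, 0\<^sub>m m m) **\<^sub>d A = A"
  by (auto simp: dcarrier_def dmult_def)

lemma dmult_one_right: "A \<in> dcarrier m n \<Longrightarrow> A **\<^sub>d (1\<^sub>m n, 0\<^sub>m n n) = A"
  by (auto simp: dcarrier_def dmult_def)

lemma dunitaryD:
  assumes "dunitary k U"
  shows "U \<in> dcarrier k k" "dstar U \<in> dcarrier k k"
    "dstar U **\<^sub>d U = (1\<^sub>m k, 0\<^sub>m k k)" "U **\<^sub>d dstar U = (1\<^sub>m k, 0\<^sub>m k k)"
  using assms dstar_dcarrier by (auto simp: dunitary_def)

lemma dunitary_dstar: "dunitary k U \<Longrightarrow> dunitary k (dstar U)"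
  by (auto simp: dunitary_def dstar_dcarrier)

lemma dunitary_cancel_left:
  assumes "dunitary k B" "Y \<in> dcarrier k c"
  shows "dstar B **\<^sub>d (B **\<^sub>d Y) = Y"
  using dmult_assoc[OF dunitaryD(2,1)[OF assms(1)] assms(2)]
  by (simp add: dunitaryD(3)[OF assms(1)] dmult_one_left[OF assms(2)])

lemma dunitary_cancel_right:
  assumes "dunitary k B" "Y \<in> dcarrier c k"
  shows "Y **\<^sub>d dstar B **\<^sub>d B = Y"
  using dmult_assoc[OF assms(2) dunitaryD(2,1)[OF assms(1)]]
  by (simp add: dunitaryD(3)[OF assms(1)] dmult_one_right[OF assms(2)])

lemma dmult_dunitary_cancel_mid:
  assumes L: "L \<in> dcarrier a a'" and P: "P \<in> dcarrier a' k" and B: "dunitary k B"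
    and Q: "Q \<in> dcarrier k c'" and R: "R \<in> dcarrier c' c"
  shows "(L **\<^sub>d P **\<^sub>d dstar B) **\<^sub>d (B **\<^sub>d Q **\<^sub>d R) = L **\<^sub>d (P **\<^sub>d Q) **\<^sub>d R"
proof -
  note b = dunitaryD[OF B]
  have LP: "L **\<^sub>d P \<in> dcarrier a k" and QR: "Q **\<^sub>d R \<in> dcarrier k c"
    using dmult_dcarrier[OF L P] dmult_dcarrier[OF Q R] .
  have "(L **\<^sub>d P **\<^sub>d dstar B) **\<^sub>d (B **\<^sub>d Q **\<^sub>d R)
      = L **\<^sub>d P **\<^sub>d (dstar B **\<^sub>d (B **\<^sub>d (Q **\<^sub>d R)))"
    unfolding dmult_assoc[OF b(1) Q R]
    by (rule dmult_assoc[OF LP b(2) dmult_dcarrier[OF b(1) QR]])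
  also have "\<dots> = L **\<^sub>d P **\<^sub>d Q **\<^sub>d R"
    unfolding dunitary_cancel_left[OF B QR] by (rule dmult_assoc[OF LP Q R, symmetric])
  also have "\<dots> = L **\<^sub>d (P **\<^sub>d Q) **\<^sub>d R"
    unfolding dmult_assoc[OF L P Q] ..
  finally show ?thesis .
qed

lemma dunitary_unframe:
  assumes U: "dunitary m U" and V: "dunitary n V" and P: "P \<in> dcarrier m n"
  shows "dstar U **\<^sub>d (U **\<^sub>d P **\<^sub>d dstar V) **\<^sub>d V = P"
proof -
  have PV: "P **\<^sub>d dstar V \<in> dcarrier m n"
    using dmult_dcarrier[OF P dunitaryD(2)[OF V]] .
  show ?thesis
    unfolding dmult_assoc[OF dunitaryD(1)[OF U] P dunitaryD(2)[OF V]]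
      dunitary_cancel_left[OF U PV] dunitary_cancel_right[OF V P] ..
qed

lemma dunitary_frame_dcarrier:
  assumes "dunitary m U" "dunitary n V" "P \<in> dcarrier m n"
  shows "U **\<^sub>d P **\<^sub>d dstar V \<in> dcarrier m n"
  by (rule dmult_dcarrier[OF dmult_dcarrier[OF dunitaryD(1)[OF assms(1)] assms(3)] dunitaryD(2)[OF assms(2)]])

lemma dunitary_frame_eq_iff:
  assumes "dunitary m U" "dunitary n V" "P \<in> dcarrier m n" "Q \<in> dcarrier m n"
  shows "U **\<^sub>d P **\<^sub>d dstar V = U **\<^sub>d Q **\<^sub>d dstar V \<longleftrightarrow> P = Q"
  by (metis assms dunitary_unframe)

lemma dstar_frame:
  assumes "U \<in> dcarrier m m" "P \<in> dcarrier m n" "V \<in> dcarrier n n"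
  shows "dstar (U **\<^sub>d P **\<^sub>d dstar V) = V **\<^sub>d dstar P **\<^sub>d dstar U"
  using assms
  by (simp add: dstar_dmult[of _ m n _ n] dstar_dmult[of U m m P n] dstar_dcarrier dmult_dcarrier
      dmult_assoc[of V n n _ m _ m])

section \<open>Penrose conditions\<close>

definition penrose :: "complex mat \<Rightarrow> complex mat \<Rightarrow> bool" where
  "penrose A X \<longleftrightarrow> A * X * A = A \<and> X * A * X = X
     \<and> ctrans (A * X) = A * X \<and> ctrans (X * A) = X * A"

text \<open>Conditions (1e), (2), (3), (4), with \<open>Ae\<close> in the role of the essential part of \<open>A\<close>.\<close>

definition dual_penrose :: "dcmat \<Rightarrow> dcmat \<Rightarrow> dcmat \<Rightarrow> bool" where
  "dual_penrose A Ae X \<longleftrightarrow> A **\<^sub>d X **\<^sub>d A = Ae \<and> X **\<^sub>d A **\<^sub>d X = X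
     \<and> dstar (A **\<^sub>d X) = A **\<^sub>d X \<and> dstar (X **\<^sub>d A) = X **\<^sub>d A"

lemma dual_penroseD:
  assumes "dual_penrose A Ae X"
  shows "A **\<^sub>d X **\<^sub>d A = Ae" "X **\<^sub>d A **\<^sub>d X = X"
    "dstar (A **\<^sub>d X) = A **\<^sub>d X" "dstar (X **\<^sub>d A) = X **\<^sub>d A"
proof -
  note c = assms[unfolded dual_penrose_def]
  show "A **\<^sub>d X **\<^sub>d A = Ae" using c by (rule conjunct1)
  show "X **\<^sub>d A **\<^sub>d X = X" using c[THEN conjunct2] by (rule conjunct1)
  show "dstar (A **\<^sub>d X) = A **\<^sub>d X" using c[THEN conjunct2, THEN conjunct2] by (rule conjunct1)
  show "dstar (X **\<^sub>d A) = X **\<^sub>d A" using c[THEN conjunct2, THEN conjunct2] by (rule conjunct2)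
qed

lemma penroseD:
  assumes "penrose A X"
  shows "A * X * A = A" "X * A * X = X" "ctrans (A * X) = A * X" "ctrans (X * A) = X * A"
proof -
  note c = assms[unfolded penrose_def]
  show "A * X * A = A" using c by (rule conjunct1)
  show "X * A * X = X" using c[THEN conjunct2] by (rule conjunct1)
  show "ctrans (A * X) = A * X" using c[THEN conjunct2, THEN conjunct2] by (rule conjunct1)
  show "ctrans (X * A) = X * A" using c[THEN conjunct2, THEN conjunct2] by (rule conjunct2)
qed

lemma dual_penrose_dunitary_iff:
  assumes U: "dunitary m U" and V: "dunitary n V"
    and S: "S \<in> dcarrier m n" and E: "E \<in> dcarrier m n" and W: "W \<in> dcarrier n m"
  shows "dual_penrose (U **\<^sub>d S **\<^sub>d dstar V) (U **\<^sub>d E **\<^sub>d dstar V) (V **\<^sub>d W **\<^sub>d dstar U)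
    \<longleftrightarrow> dual_penrose S E W"
proof -
  note u = dunitaryD[OF U] and v = dunitaryD[OF V]
  have SW: "S **\<^sub>d W \<in> dcarrier m m" and WS: "W **\<^sub>d S \<in> dcarrier n n"
    using S W by (simp_all add: dmult_dcarrier)
  have SWS: "S **\<^sub>d W **\<^sub>d S \<in> dcarrier m n" and WSW: "W **\<^sub>d S **\<^sub>d W \<in> dcarrier n m"
    using dmult_dcarrier[OF SW S] dmult_dcarrier[OF WS W] .
  have AX: "(U **\<^sub>d S **\<^sub>d dstar V) **\<^sub>d (V **\<^sub>d W **\<^sub>d dstar U) = U **\<^sub>d (S **\<^sub>d W) **\<^sub>d dstar U"
    by (rule dmult_dunitary_cancel_mid[OF u(1) S V W u(2)])
  have XA: "(V **\<^sub>d W **\<^sub>d dstar U) **\<^sub>d (U **\<^sub>d S **\<^sub>d dstar V) = V **\<^sub>d (W **\<^sub>d S) **\<^sub>d dstar V"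
    by (rule dmult_dunitary_cancel_mid[OF v(1) W U S v(2)])
  have AXA: "U **\<^sub>d (S **\<^sub>d W) **\<^sub>d dstar U **\<^sub>d (U **\<^sub>d S **\<^sub>d dstar V)
      = U **\<^sub>d (S **\<^sub>d W **\<^sub>d S) **\<^sub>d dstar V"
    by (rule dmult_dunitary_cancel_mid[OF u(1) SW U S v(2)])
  have XAX: "V **\<^sub>d (W **\<^sub>d S) **\<^sub>d dstar V **\<^sub>d (V **\<^sub>d W **\<^sub>d dstar U)
      = V **\<^sub>d (W **\<^sub>d S **\<^sub>d W) **\<^sub>d dstar U"
    by (rule dmult_dunitary_cancel_mid[OF v(1) WS V W u(2)])
  show ?thesis
    unfolding dual_penrose_def AX XA AXA XAX dstar_frame[OF u(1) SW u(1)] dstar_frame[OF v(1) WS v(1)]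
      dunitary_frame_eq_iff[OF U V SWS E] dunitary_frame_eq_iff[OF V U WSW W]
      dunitary_frame_eq_iff[OF U U dstar_dcarrier[OF SW] SW]
      dunitary_frame_eq_iff[OF V V dstar_dcarrier[OF WS] WS] ..
qed

lemma dual_penrose_dunitary_unique:
  assumes U: "dunitary m U" and V: "dunitary n V"
    and S: "S \<in> dcarrier m n" and E: "E \<in> dcarrier m n"
    and unique: "\<forall>W \<in> dcarrier n m. dual_penrose S E W \<longrightarrow> W = G"
    and X: "X \<in> dcarrier n m"
    and pen: "dual_penrose (U **\<^sub>d S **\<^sub>d dstar V) (U **\<^sub>d E **\<^sub>d dstar V) X"
  shows "X = V **\<^sub>d G **\<^sub>d dstar U"
proof -
  define W where "W = dstar V **\<^sub>d X **\<^sub>d U"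
  have W: "W \<in> dcarrier n m"
    using dunitary_frame_dcarrier[OF dunitary_dstar[OF V] dunitary_dstar[OF U] X] by (simp add: W_def)
  have XW: "X = V **\<^sub>d W **\<^sub>d dstar U"
    using dunitary_unframe[OF dunitary_dstar[OF V] dunitary_dstar[OF U] X] by (simp add: W_def)
  have "dual_penrose S E W"
    using pen unfolding XW dual_penrose_dunitary_iff[OF U V S E W] .
  then show ?thesis
    using unique W XW by blast
qed

lemma dual_penrose_imp_penrose_fst:
  assumes "dual_penrose A Ae X" "fst Ae = fst A"
  shows "penrose (fst A) (fst X)"
proof -
  note eqs = dual_penroseD[OF assms(1)]
  have "fst A * fst X * fst A = fst A"
    using arg_cong[OF eqs(1), of fst] assms(2) by (simp only: fst_dmult)
  moreover have "fst X * fst A * fst X = fst X"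
    using arg_cong[OF eqs(2), of fst] by (simp only: fst_dmult)
  moreover have "ctrans (fst A * fst X) = fst A * fst X"
    using arg_cong[OF eqs(3), of fst] by (simp only: fst_dmult fst_dstar)
  moreover have "ctrans (fst X * fst A) = fst X * fst A"
    using arg_cong[OF eqs(4), of fst] by (simp only: fst_dmult fst_dstar)
  ultimately show ?thesis
    unfolding penrose_def by (intro conjI)
qed

lemma penrose_imp_dual_penrose_complex:
  assumes B: "B \<in> carrier_mat m n" and Y: "Y \<in> carrier_mat n m" and "penrose B Y"
  shows "dual_penrose (B, 0\<^sub>m m n) (B, 0\<^sub>m m n) (Y, 0\<^sub>m n m)"
proof -
  have BY: "B * Y \<in> carrier_mat m m" and YB: "Y * B \<in> carrier_mat n n"
    using B Y by simp_all
  show ?thesis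
    unfolding dual_penrose_def dstar_def fst_conv snd_conv ctrans_zero
      dmult_complex[OF B Y] dmult_complex[OF Y B] dmult_complex[OF BY B] dmult_complex[OF YB Y]
      penroseD[OF assms(3)]
    by (intro conjI refl)
qed

lemma mp_inverse_eqI:
  assumes "B \<in> carrier_mat m n" "Y \<in> carrier_mat n m" "penrose B Y"
    and "\<And>Z. Z \<in> carrier_mat n m \<Longrightarrow> penrose B Z \<Longrightarrow> Z = Y"
  shows "mp_inverse B = Y"
proof -
  have "mp_inverse B = (THE X. X \<in> carrier_mat n m \<and> penrose B X)"
    using assms(1) by (simp add: mp_inverse_def penrose_def)
  then show ?thesis
    using assms(2-4) by (metis (no_types, lifting) the_equality)
qed

section \<open>Rectangular diagonal matrices\<close>

definition rect_diag :: "nat \<Rightarrow> nat \<Rightarrow> (nat \<Rightarrow> real) \<Rightarrow> complex mat" where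
  "rect_diag m n a = mat m n (\<lambda>(i, j). if i = j then complex_of_real (a i) else 0)"

lemma ddiag_rect_diag:
  "ddiag m n d = (rect_diag m n (\<lambda>i. fst (d i)), rect_diag m n (\<lambda>i. snd (d i)))"
  by (simp add: ddiag_def rect_diag_def)

lemma rect_diag_carrier_mat [simp]: "rect_diag m n a \<in> carrier_mat m n"
  by (simp add: rect_diag_def)

lemma rect_diag_dims [simp]: "dim_row (rect_diag m n a) = m" "dim_col (rect_diag m n a) = n"
  by (simp_all add: rect_diag_def)

lemma index_rect_diag [simp]:
  "i < m \<Longrightarrow> j < n \<Longrightarrow> rect_diag m n a $$ (i, j) = (if i = j then complex_of_real (a i) else 0)"
  by (simp add: rect_diag_def)

lemma rect_diag_cong: "(\<And>i. i < m \<Longrightarrow> i < n \<Longrightarrow> a i = b i) \<Longrightarrow> rect_diag m n a = rect_diag m n b"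
  by (rule eq_matI) auto

lemma rect_diag_add: "rect_diag m n a + rect_diag m n b = rect_diag m n (\<lambda>i. a i + b i)"
  by (rule eq_matI) auto

lemma ctrans_rect_diag: "ctrans (rect_diag m n a) = rect_diag n m a"
  by (rule eq_matI) auto

lemma index_rect_diag_mult:
  assumes "dim_row M = n" "i < m" "j < dim_col M"
  shows "(rect_diag m n a * M) $$ (i, j) = (if i < n then complex_of_real (a i) * M $$ (i, j) else 0)"
proof -
  have "(rect_diag m n a * M) $$ (i, j)
      = (\<Sum>l\<in>{0..<n}. if i = l then complex_of_real (a i) * M $$ (l, j) else 0)"
    using assms by (auto simp: scalar_prod_def if_distrib[of "\<lambda>x. x * _"] cong: if_cong)
  then show ?thesis by (simp add: sum.delta)
qed

lemma index_mult_rect_diag: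
  assumes "dim_col M = n" "i < dim_row M" "j < k"
  shows "(M * rect_diag n k a) $$ (i, j) = (if j < n then M $$ (i, j) * complex_of_real (a j) else 0)"
proof -
  have "(M * rect_diag n k a) $$ (i, j)
      = (\<Sum>l\<in>{0..<n}. if l = j then M $$ (i, l) * complex_of_real (a j) else 0)"
    using assms by (auto simp: scalar_prod_def if_distrib[of "\<lambda>x. _ * x"] cong: if_cong)
  then show ?thesis by (simp add: sum.delta')
qed

lemma rect_diag_mult:
  "rect_diag m n a * rect_diag n k b = rect_diag m k (\<lambda>i. if i < n then a i * b i else 0)"
  by (rule eq_matI) (auto simp: index_rect_diag_mult simp del: index_mult_mat(1) cong: if_cong)

lemma eq_rect_diagI:
  assumes "W \<in> carrier_mat n m"
    and "\<And>i j. i < m \<Longrightarrow> i < n \<Longrightarrow> s i \<noteq> 0 \<Longrightarrow> j < m \<Longrightarrow> j < n \<Longrightarrow> s j \<noteq> 0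
      \<Longrightarrow> W $$ (i, j) = complex_of_real (if i = j then a i else 0)"
    and "\<And>i j. i < m \<Longrightarrow> i < n \<Longrightarrow> s i \<noteq> 0 \<Longrightarrow> j < m \<Longrightarrow> (j < n \<Longrightarrow> s j = 0) \<Longrightarrow> W $$ (i, j) = 0"
    and "\<And>i j. i < n \<Longrightarrow> (i < m \<Longrightarrow> s i = 0) \<Longrightarrow> j < m \<Longrightarrow> j < n \<Longrightarrow> s j \<noteq> 0 \<Longrightarrow> W $$ (i, j) = 0"
    and "\<And>i j. i < n \<Longrightarrow> (i < m \<Longrightarrow> s i = 0) \<Longrightarrow> j < m \<Longrightarrow> (j < n \<Longrightarrow> s j = 0) \<Longrightarrow> W $$ (i, j) = 0"
    and "\<And>i. s i = 0 \<Longrightarrow> a i = 0"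
  shows "W = rect_diag n m a"
proof (rule eq_matI)
  fix i j assume "i < dim_row (rect_diag n m a)" "j < dim_col (rect_diag n m a)"
  then have ij: "i < n" "j < m" by simp_all
  show "W $$ (i, j) = rect_diag n m a $$ (i, j)"
  proof (cases "i < m \<and> s i \<noteq> 0"; cases "j < n \<and> s j \<noteq> 0")
    assume "i < m \<and> s i \<noteq> 0" "j < n \<and> s j \<noteq> 0"
    then show ?thesis using ij assms(2)[of i j] by simp
  next
    assume "i < m \<and> s i \<noteq> 0" "\<not> (j < n \<and> s j \<noteq> 0)"
    then show ?thesis using ij assms(3)[of i j] by auto
  next
    assume "\<not> (i < m \<and> s i \<noteq> 0)" "j < n \<and> s j \<noteq> 0"
    then show ?thesis using ij assms(4)[of i j] by auto
  next
    assume "\<not> (i < m \<and> s i \<noteq> 0)" "\<not> (j < n \<and> s j \<noteq> 0)"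
    then show ?thesis using ij assms(5)[of i j] assms(6)[of i] by auto
  qed
qed (use assms(1) in simp_all)

text \<open>Since \<open>x / 0 = 0\<close>, the formulas for the inverse vanish at zero entries without any case
  distinction.\<close>

lemma rect_diag_dual_penrose:
  "dual_penrose (rect_diag m n s, rect_diag m n e)
     (rect_diag m n s, rect_diag m n (\<lambda>i. if s i = 0 then 0 else e i))
     (rect_diag n m (\<lambda>i. 1 / s i), rect_diag n m (\<lambda>i. - e i / (s i)\<^sup>2))"
  unfolding dual_penrose_def
  by (auto simp: dmult_def dstar_def rect_diag_mult rect_diag_add ctrans_rect_diag intro!: rect_diag_cong)
     (auto simp: field_simps power2_eq_square)

lemma rect_diag_penrose_unique:
  assumes W: "W \<in> carrier_mat n m" and pen: "penrose (rect_diag m n s) W"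
  shows "W = rect_diag n m (\<lambda>i. 1 / s i)"
proof -
  define S where "S = rect_diag m n s"
  note eqs = penroseD[OF pen, folded S_def]
  have [simp]: "dim_row W = n" "dim_col W = m" "dim_row S = m" "dim_col S = n"
    using W by (auto simp: S_def)
  have SW: "(S * W) $$ (i, j) = (if i < n then s i * W $$ (i, j) else 0)" if "i < m" "j < m" for i j
    using that by (simp add: S_def index_rect_diag_mult del: index_mult_mat(1))
  have WS: "(W * S) $$ (i, j) = (if j < m then W $$ (i, j) * s j else 0)" if "i < n" "j < n" for i j
    using that by (simp add: S_def index_mult_rect_diag del: index_mult_mat(1))
  \<comment> \<open>Split indices by whether the diagonal entry is nonzero: the hermitian conditions kill the
    two off-diagonal blocks, \<open>S W S = S\<close> fixes the nonzero block and \<open>W S W = W\<close> the zero block.\<close>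
  have upper: "W $$ (i, j) = 0" if "i < m" "i < n" "s i \<noteq> 0" "j < m" "j < n \<Longrightarrow> s j = 0" for i j
  proof -
    have "cnj ((S * W) $$ (j, i)) = (S * W) $$ (i, j)"
      using arg_cong[OF eqs(3), of "\<lambda>M. M $$ (i, j)"] that by simp
    then show ?thesis
      unfolding SW[OF that(1,4)] SW[OF that(4,1)] using that by (cases "j < n") auto
  qed
  have lower: "W $$ (i, j) = 0" if "i < n" "i < m \<Longrightarrow> s i = 0" "j < m" "j < n" "s j \<noteq> 0" for i j
  proof -
    have "cnj ((W * S) $$ (j, i)) = (W * S) $$ (i, j)"
      using arg_cong[OF eqs(4), of "\<lambda>M. M $$ (i, j)"] that by simp
    then show ?thesis
      unfolding WS[OF that(1,4)] WS[OF that(4,1)] using that by (cases "i < m") auto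
  qed
  have active: "W $$ (i, j) = (if i = j then 1 / s i else 0)"
    if "i < m" "i < n" "s i \<noteq> 0" "j < m" "j < n" "s j \<noteq> 0" for i j
  proof -
    have "(S * W * S) $$ (i, j) = S $$ (i, j)"
      using eqs(1) by simp
    then have "s i * W $$ (i, j) * s j = (if i = j then s i else 0)"
      using that by (simp add: S_def index_rect_diag_mult index_mult_rect_diag del: index_mult_mat(1))
    then show ?thesis
      using that by (cases "i = j") (auto simp: field_simps)
  qed
  have inactive: "W $$ (i, j) = 0"
    if "i < n" "i < m \<Longrightarrow> s i = 0" "j < m" "j < n \<Longrightarrow> s j = 0" for i j
  proof -
    have "row (W * S) i = 0\<^sub>v n"
    proof (rule eq_vecI)
      fix l assume "l < dim_vec (0\<^sub>v n :: complex vec)"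
      then show "row (W * S) i $ l = 0\<^sub>v n $ l"
        using that WS lower[of i l] by (cases "l < m \<and> s l \<noteq> 0") auto
    qed simp
    moreover have "col W j \<in> carrier_vec n"
      using col_dim[of W j] by simp
    ultimately have "(W * S * W) $$ (i, j) = 0"
      using that by simp
    then show ?thesis
      using eqs(2) that by simp
  qed
  show ?thesis
    by (rule eq_rect_diagI[OF W active upper lower inactive]) auto
qed

lemma rect_diag_dual_penrose_snd_unique:
  fixes m n :: nat and s e :: "nat \<Rightarrow> real"
  defines "G \<equiv> rect_diag n m (\<lambda>i. 1 / s i)"
  assumes D: "D \<in> carrier_mat n m"
    and pen: "dual_penrose (rect_diag m n s, rect_diag m n e)
      (rect_diag m n s, rect_diag m n (\<lambda>i. if s i = 0 then 0 else e i)) (G, D)"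
  shows "D = rect_diag n m (\<lambda>i. - e i / (s i)\<^sup>2)"
proof -
  note eqs = dual_penroseD[OF pen, THEN arg_cong[where f = snd],
      unfolded snd_dmult snd_dstar fst_dmult fst_conv snd_conv]
  have [simp]: "dim_row D = n" "dim_col D = m"
    using D by auto
  note entries = index_rect_diag_mult index_mult_rect_diag rect_diag_mult index_add_mat(1)
  have active: "D $$ (i, j) = (if i = j then - e i / (s i)\<^sup>2 else 0)"
    if "i < m" "i < n" "s i \<noteq> 0" "j < m" "j < n" "s j \<noteq> 0" for i j
  proof -
    have "s i * D $$ (i, j) * s j = (if i = j then - e i else 0)"
      using arg_cong[OF eqs(1), of "\<lambda>M. M $$ (i, j)"] that
      by (simp add: G_def entries algebra_simps add_eq_0_iff del: index_mult_mat(1)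
          cong: if_cong split: if_splits)
    then show ?thesis
      using that by (cases "i = j") (auto simp: field_simps power2_eq_square)
  qed
  have upper: "D $$ (i, j) = 0" if "i < m" "i < n" "s i \<noteq> 0" "j < m" "j < n \<Longrightarrow> s j = 0" for i j
  proof -
    have "s i * D $$ (i, j) = 0"
      using arg_cong[OF eqs(3), of "\<lambda>M. M $$ (i, j)"] that
      by (cases "j < n") (simp_all add: G_def entries del: index_mult_mat(1) cong: if_cong split: if_splits)
    then show ?thesis
      using that by simp
  qed
  have lower: "D $$ (i, j) = 0" if "i < n" "i < m \<Longrightarrow> s i = 0" "j < m" "j < n" "s j \<noteq> 0" for i j
  proof -
    have "D $$ (i, j) * s j = 0"
      using arg_cong[OF eqs(4), of "\<lambda>M. M $$ (i, j)"] that
      by (cases "i < m") (simp_all add: G_def entries del: index_mult_mat(1) cong: if_cong split: if_splits)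
    then show ?thesis
      using that by simp
  qed
  have inactive: "D $$ (i, j) = 0"
    if "i < n" "i < m \<Longrightarrow> s i = 0" "j < m" "j < n \<Longrightarrow> s j = 0" for i j
    using arg_cong[OF eqs(2), of "\<lambda>M. M $$ (i, j)"] that
    by (cases "i < m"; cases "j < n")
      (simp_all add: G_def entries del: index_mult_mat(1) cong: if_cong split: if_splits)
  show ?thesis
    by (rule eq_rect_diagI[OF D active upper lower inactive]) auto
qed

section \<open>Dual singular value decompositions\<close>

definition dreal_essential :: "dreal \<Rightarrow> dreal" where
  "dreal_essential a = (if fst a = 0 then (0, 0) else a)"

lemma ddiag_dcarrier: "ddiag m n d \<in> dcarrier m n"
  by (simp add: ddiag_rect_diag dcarrier_def)

lemma ddiag_essential_rect_diag:
  "ddiag m n (\<lambda>i. dreal_essential (d i))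
     = (rect_diag m n (\<lambda>i. fst (d i)), rect_diag m n (\<lambda>i. if fst (d i) = 0 then 0 else snd (d i)))"
  unfolding ddiag_rect_diag dreal_essential_def by (auto intro!: rect_diag_cong)

lemma ddiag_dual_penrose:
  "dual_penrose (ddiag m n d) (ddiag m n (\<lambda>i. dreal_essential (d i)))
     (ddiag n m (\<lambda>i. dreal_inv (d i)))"
  using rect_diag_dual_penrose[of m n "\<lambda>i. fst (d i)" "\<lambda>i. snd (d i)"]
  by (simp add: ddiag_essential_rect_diag ddiag_rect_diag dreal_inv_def)

lemma ddiag_dual_penrose_unique:
  assumes W: "W \<in> dcarrier n m"
    and pen: "dual_penrose (ddiag m n d) (ddiag m n (\<lambda>i. dreal_essential (d i))) W"
  shows "W = ddiag n m (\<lambda>i. dreal_inv (d i))"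
proof -
  obtain Ws Wd where W_eq: "W = (Ws, Wd)"
    by (cases W)
  have "penrose (fst (ddiag m n d)) (fst W)"
    using pen by (rule dual_penrose_imp_penrose_fst) (simp add: ddiag_essential_rect_diag ddiag_rect_diag)
  then have Ws: "Ws = rect_diag n m (\<lambda>i. 1 / fst (d i))"
    using W by (intro rect_diag_penrose_unique) (simp_all add: W_eq ddiag_rect_diag dcarrier_def)
  have "Wd = rect_diag n m (\<lambda>i. - snd (d i) / (fst (d i))\<^sup>2)"
    using W pen unfolding W_eq Ws ddiag_essential_rect_diag ddiag_rect_diag
    by (intro rect_diag_dual_penrose_snd_unique) (simp_all add: dcarrier_def)
  then show ?thesis
    by (simp add: W_eq Ws ddiag_rect_diag dreal_inv_def)
qed

lemma dual_svd_dual_penrose: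
  assumes U: "dunitary m U" and V: "dunitary n V"
  shows "dual_penrose (U **\<^sub>d ddiag m n d **\<^sub>d dstar V)
      (U **\<^sub>d ddiag m n (\<lambda>i. dreal_essential (d i)) **\<^sub>d dstar V)
      (V **\<^sub>d ddiag n m (\<lambda>i. dreal_inv (d i)) **\<^sub>d dstar U)"
  unfolding dual_penrose_dunitary_iff[OF U V ddiag_dcarrier ddiag_dcarrier ddiag_dcarrier]
  by (rule ddiag_dual_penrose)

lemma dual_svd_dual_penrose_unique:
  assumes U: "dunitary m U" and V: "dunitary n V" and X: "X \<in> dcarrier n m"
    and pen: "dual_penrose (U **\<^sub>d ddiag m n d **\<^sub>d dstar V)
      (U **\<^sub>d ddiag m n (\<lambda>i. dreal_essential (d i)) **\<^sub>d dstar V) X"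
  shows "X = V **\<^sub>d ddiag n m (\<lambda>i. dreal_inv (d i)) **\<^sub>d dstar U"
  using dual_penrose_dunitary_unique[OF U V ddiag_dcarrier ddiag_dcarrier _ X pen]
    ddiag_dual_penrose_unique by blast

lemma complex_dual_svd_snd:
  assumes U: "dunitary m U" and V: "dunitary n V" and B: "B \<in> carrier_mat m n"
    and S: "S \<in> dcarrier m n" and svd: "(B, 0\<^sub>m m n) = U **\<^sub>d S **\<^sub>d dstar V"
  shows "snd S = fst S * (ctrans (fst V) * snd V) + (ctrans (snd U) * fst U) * fst S"
proof -
  define A :: dcmat where "A = (B, 0\<^sub>m m n)"
  have A: "A \<in> dcarrier m n"
    using B by (simp add: A_def dcarrier_def)
  note u = dunitaryD[OF U] and v = dunitaryD[OF V]
  have SA: "S = dstar U **\<^sub>d A **\<^sub>d V"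
    using dunitary_unframe[OF U V S] svd by (simp add: A_def)
  have UA: "dstar U **\<^sub>d A \<in> dcarrier m n"
    by (rule dmult_dcarrier[OF u(2) A])
  have "S **\<^sub>d dstar V = dstar U **\<^sub>d A"
    unfolding SA using dunitary_cancel_right[OF dunitary_dstar[OF V] UA] by simp
  moreover have "U **\<^sub>d S = U **\<^sub>d (dstar U **\<^sub>d A) **\<^sub>d V"
    unfolding SA by (rule dmult_assoc[OF u(1) UA v(1), symmetric])
  moreover have "U **\<^sub>d (dstar U **\<^sub>d A) = A"
    using dunitary_cancel_left[OF dunitary_dstar[OF U] A] by simp
  ultimately have left: "fst S * ctrans (fst V) = ctrans (fst U) * B"
    and right: "fst U * fst S = B * fst V"
    by (simp_all add: A_def dmult_def dstar_def)
  obtain Us Ud Vs Vd where UV: "U = (Us, Ud)" "V = (Vs, Vd)"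
    by (cases U, cases V)
  have c: "Us \<in> carrier_mat m m" "Ud \<in> carrier_mat m m" "Vs \<in> carrier_mat n n"
    "Vd \<in> carrier_mat n n" "fst S \<in> carrier_mat m n" "ctrans Us \<in> carrier_mat m m"
    "ctrans Ud \<in> carrier_mat m m" "ctrans Vs \<in> carrier_mat n n"
    using u(1) v(1) S by (simp_all add: UV dcarrier_def)
  have UdB: "ctrans Ud * B \<in> carrier_mat m n"
    using c(7) B by (rule mult_carrier_mat)
  have "snd S = ctrans Us * B * Vd + ctrans Ud * B * Vs"
    using c B by (simp add: SA A_def UV dmult_def dstar_def left_add_zero_mat[OF UdB])
  also have "ctrans Us * B * Vd = fst S * (ctrans Vs * Vd)"
    unfolding left[unfolded UV fst_conv, symmetric] by (rule assoc_mult_mat[OF c(5,8,4)])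
  also have "ctrans Ud * B * Vs = ctrans Ud * Us * fst S"
    using right[unfolded UV fst_conv]
    by (simp only: assoc_mult_mat[OF c(7) B c(3)] assoc_mult_mat[OF c(7,1,5)])
  finally show ?thesis
    by (simp add: UV)
qed

lemma complex_ddiag_svd_no_infinitesimal:
  assumes U: "dunitary m U" and V: "dunitary n V" and B: "B \<in> carrier_mat m n"
    and svd: "(B, 0\<^sub>m m n) = U **\<^sub>d ddiag m n d **\<^sub>d dstar V"
    and i: "i < m" "i < n" and zero: "fst (d i) = 0"
  shows "snd (d i) = 0"
proof -
  define M where "M = ctrans (fst V) * snd V"
  define N where "N = ctrans (snd U) * fst U"
  have [simp]: "dim_row M = n" "dim_col M = n" "dim_row N = m" "dim_col N = m"
    using dunitaryD(1)[OF U] dunitaryD(1)[OF V] by (auto simp: M_def N_def dcarrier_def)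
  have "rect_diag m n (\<lambda>i. snd (d i))
      = rect_diag m n (\<lambda>i. fst (d i)) * M + N * rect_diag m n (\<lambda>i. fst (d i))"
    using complex_dual_svd_snd[OF U V B ddiag_dcarrier svd]
    by (simp add: ddiag_rect_diag M_def N_def)
  from arg_cong[OF this, of "\<lambda>X. X $$ (i, i)"] show ?thesis
    using i zero by (simp add: index_rect_diag_mult index_mult_rect_diag del: index_mult_mat(1))
qed

lemma complex_dual_svd_essential:
  assumes U: "dunitary m U" and V: "dunitary n V" and B: "B \<in> carrier_mat m n"
    and svd: "(B, 0\<^sub>m m n) = U **\<^sub>d ddiag m n d **\<^sub>d dstar V"
  shows "ddiag m n (\<lambda>i. dreal_essential (d i)) = ddiag m n d"
  unfolding ddiag_essential_rect_diag ddiag_rect_diag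
  using complex_ddiag_svd_no_infinitesimal[OF U V B svd] by (auto intro!: rect_diag_cong)

lemma dual_penrose_complex_eq_mp_inverse:
  assumes B: "B \<in> carrier_mat m n" and G: "G \<in> dcarrier n m"
    and pen: "dual_penrose (B, 0\<^sub>m m n) (B, 0\<^sub>m m n) G"
    and unique: "\<forall>X \<in> dcarrier n m. dual_penrose (B, 0\<^sub>m m n) (B, 0\<^sub>m m n) X \<longrightarrow> X = G"
  shows "G = (mp_inverse B, 0\<^sub>m n m)"
proof -
  have lift: "(Y, 0\<^sub>m n m) = G" if "Y \<in> carrier_mat n m" "penrose B Y" for Y
    using unique penrose_imp_dual_penrose_complex[OF B that] that by (simp add: dcarrier_def)
  have Gs: "fst G \<in> carrier_mat n m"
    using G by (simp add: dcarrier_def)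
  have pen_s: "penrose B (fst G)"
    using dual_penrose_imp_penrose_fst[OF pen] by simp
  have "mp_inverse B = fst G"
    using B Gs pen_s by (rule mp_inverse_eqI) (use lift in force)
  then show ?thesis
    using lift[OF Gs pen_s] by simp
qed

lemma complex_dual_svd_gmpi:
  assumes U: "dunitary m U" and V: "dunitary n V" and A: "A \<in> dcarrier m n"
    and Ad: "snd A = 0\<^sub>m m n" and svd: "A = U **\<^sub>d ddiag m n d **\<^sub>d dstar V"
  shows "V **\<^sub>d ddiag n m (\<lambda>i. dreal_inv (d i)) **\<^sub>d dstar U = (mp_inverse (fst A), 0\<^sub>m n m)"
proof -
  obtain B where AB: "A = (B, 0\<^sub>m m n)"
    using Ad by (cases A) simp
  have B: "B \<in> carrier_mat m n"
    using A by (simp add: AB dcarrier_def)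
  have Ae: "U **\<^sub>d ddiag m n (\<lambda>i. dreal_essential (d i)) **\<^sub>d dstar V = A"
    using complex_dual_svd_essential[OF U V B svd[unfolded AB]] svd by simp
  note pen = dual_svd_dual_penrose[OF U V, of d, unfolded Ae svd[symmetric], unfolded AB]
  note unique = dual_svd_dual_penrose_unique[OF U V, of _ d, unfolded Ae svd[symmetric], unfolded AB]
  show ?thesis
    using dual_penrose_complex_eq_mp_inverse[OF B dunitary_frame_dcarrier[OF V U ddiag_dcarrier] pen]
      unique by (simp add: AB)
qed

theorem theorem4p1:
  fixes m n r t :: nat and A U V :: dcmat and \<mu> :: "nat \<Rightarrow> dreal"
  assumes A: "A \<in> dcarrier m n"
    and U: "dunitary m U" and V: "dunitary n V"
    and rt: "r \<le> t" and tmn: "t \<le> min m n"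
    and appr: "\<forall>i<r. fst (\<mu> i) > 0"
    and appr_ord: "\<forall>i j. i \<le> j \<and> j < r \<longrightarrow> dreal_le (\<mu> j) (\<mu> i)"
    and infi: "\<forall>i. r \<le> i \<and> i < t \<longrightarrow> fst (\<mu> i) = 0 \<and> snd (\<mu> i) > 0"
    and infi_ord: "\<forall>i j. r \<le> i \<and> i \<le> j \<and> j < t \<longrightarrow> dreal_le (\<mu> j) (\<mu> i)"
    and svd: "A = U **\<^sub>d ddiag m n (\<lambda>i. if i < t then \<mu> i else (0,0)) **\<^sub>d dstar V"
  defines "AG \<equiv> V **\<^sub>d ddiag n m (\<lambda>i. if i < r then dreal_inv (\<mu> i) else (0,0)) **\<^sub>d dstar U"
    and "Ae \<equiv> U **\<^sub>d ddiag m n (\<lambda>i. if i < r then \<mu> i else (0,0)) **\<^sub>d dstar V"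
  shows "AG \<in> dcarrier n m
      \<and> A **\<^sub>d AG **\<^sub>d A = Ae
      \<and> AG **\<^sub>d A **\<^sub>d AG = AG
      \<and> dstar (A **\<^sub>d AG) = A **\<^sub>d AG
      \<and> dstar (AG **\<^sub>d A) = AG **\<^sub>d A
      \<and> (\<forall>X \<in> dcarrier n m.
            A **\<^sub>d X **\<^sub>d A = Ae \<and> X **\<^sub>d A **\<^sub>d X = X
            \<and> dstar (A **\<^sub>d X) = A **\<^sub>d X \<and> dstar (X **\<^sub>d A) = X **\<^sub>d A
            \<longrightarrow> X = AG)
      \<and> (snd A = 0\<^sub>m m n \<longrightarrow> AG = (mp_inverse (fst A), 0\<^sub>m n m))"
proof -
  define d where "d = (\<lambda>i. if i < t then \<mu> i else (0, 0))"
  have A_eq: "A = U **\<^sub>d ddiag m n d **\<^sub>d dstar V"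
    using svd by (simp add: d_def)
  have "(\<lambda>i. dreal_essential (d i)) = (\<lambda>i. if i < r then \<mu> i else (0, 0))"
    using appr infi rt by (force simp: d_def dreal_essential_def fun_eq_iff)
  then have Ae_eq: "Ae = U **\<^sub>d ddiag m n (\<lambda>i. dreal_essential (d i)) **\<^sub>d dstar V"
    by (simp add: Ae_def)
  have "(\<lambda>i. dreal_inv (d i)) = (\<lambda>i. if i < r then dreal_inv (\<mu> i) else (0, 0))"
    using infi rt by (auto simp: d_def dreal_inv_def fun_eq_iff)
  then have AG_eq: "AG = V **\<^sub>d ddiag n m (\<lambda>i. dreal_inv (d i)) **\<^sub>d dstar U"
    by (simp add: AG_def)
  have pen: "dual_penrose A Ae AG"
    unfolding A_eq Ae_eq AG_eq by (rule dual_svd_dual_penrose[OF U V])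
  have unique: "\<forall>X \<in> dcarrier n m. dual_penrose A Ae X \<longrightarrow> X = AG"
    unfolding A_eq Ae_eq AG_eq using dual_svd_dual_penrose_unique[OF U V] by blast
  show ?thesis
    using dunitary_frame_dcarrier[OF V U ddiag_dcarrier, of "\<lambda>i. dreal_inv (d i)"] dual_penroseD[OF pen]
      unique[unfolded dual_penrose_def] complex_dual_svd_gmpi[OF U V A _ A_eq]
    unfolding AG_eq[symmetric] by (intro conjI impI) assumption+
qed

end
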